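(* Let $\mathcal M$ be a time-dependent finite-horizon MDP accessed through the quantum oracle $O_{\mathcal{QM}}$, and let $\delta\in(0,1)$. The algorithm QVI-1 described in the context makes $O\bigl(S^2\sqrt A\,H\log(SH/\delta)\bigr)$ queries to $O_{\mathcal{QM}}$.
   Context: Write $[H]=\{0,\dots,H-1\}$. The MDP $\mathcal M=(\mathcal S,\mathcal A,\{P_h\}_{h\in[H]},\{r_h\}_{h\in[H]},H)$ has finite state space $\mathcal S$ with $S=|\mathcal S|$, finite action space $\mathcal A$ with $A=|\mathcal A|$, rewards $r_h(s,a)\in[0,1]$, and transition distributions $P_h(\cdot\mid s,a)$. Write $P_{h|s,a}$ for the vector $(P_h(s'\mid s,a))_{s'\in\mathcal S}$. Real numbers are stored in fixed-point binary with no overflow; $\overline{x}$ denotes the stored representation of $x$. A binary oracle for $f\in\mathbb R^N$ is a unitary $|i\rangle|0\rangle\mapsto|i\rangle|\overline{f(i)}\rangle$. The quantum oracle of $\mathcal M$ is the unitary $O_{\mathcal{QM}}:|s\rangle|a\rangle|h\rangle|s'\rangle|0\rangle|0\rangle\mapsto|s\rangle|a\rangle|h\rangle|s'\rangle|\overline{r_h(s,a)}\rangle|\overline{P_h(s'\mid s,a)}\rangle$. Query complexity counts uses of $O_{\mathcal{QM}}$ and its inverse. QMS is a subroutine which, given a binary oracle for $f\in\mathbb R^N$ and $\zeta>0$, outputs an index of a maximum entry with probability at least $1-\zeta$, using at most $\tilde c\sqrt N\log(1/\zeta)$ oracle queries, where $\tilde c>0$ is a constant. Algorithm QVI-1$(\mathcal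 M,\delta)$: - Set $\zeta=\delta/(SH)$ and $\hat V_H=\mathbf 0$. - For $h=H-1,\dots,0$: - Build a binary oracle for the classical vector $\hat V_{h+1}$. - For each $s$, build a binary oracle for $\hat Q_{h,s}(a)=r_h(s,a)+\sum_{s'}P_h(s'\mid s,a)\hat V_{h+1}(s')$. This is computed coherently with quantum arithmetic from $O_{\mathcal{QM}}$ and the oracle for $\hat V_{h+1}$. - For each $s$, set $\hat\pi(s,h)$ to the output of QMS with failure parameter $\zeta$ on $\hat Q_{h,s}$ over $a\in\mathcal A$. - For each $s$, set $\hat V_h(s)=\hat Q_{h,s}(\hat\pi(s,h))$. - Return $\hat\pi$ and $\hat V_0$. *)

theory Defs
  imports Complex_Main
begin

text \<open>
  States are \<open>{0..<S}\<close>, actions are \<open>{0..<A}\<close>, stages are \<open>{0..<H}\<close>.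
  The MDP is given by reward function \<open>r h s a\<close> and transition probabilities
  \<open>P h s a s'\<close> = P_h(s' | s, a).
\<close>

definition is_finite_MDP ::
  "nat \<Rightarrow> nat \<Rightarrow> nat \<Rightarrow> (nat \<Rightarrow> nat \<Rightarrow> nat \<Rightarrow> real) \<Rightarrow> (nat \<Rightarrow> nat \<Rightarrow> nat \<Rightarrow> nat \<Rightarrow> real) \<Rightarrow> bool"
  where "is_finite_MDP S A H r P \<longleftrightarrow>
     (\<forall>h<H. \<forall>s<S. \<forall>a<A.
        0 \<le> r h s a \<and> r h s a \<le> 1 \<and>
        (\<forall>s'<S. 0 \<le> P h s a s') \<and> (\<Sum>s'<S. P h s a s') = 1)"

text \<open>
  Abstract model of the quantum maximum-search subroutine QMS.  A call
  \<open>qms h s f N \<zeta>\<close> (the arguments \<open>h s\<close> only identify the call, modelling independent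
  internal randomness of different calls) searches the binary oracle of \<open>f\<close> over
  indices \<open>{0..<N}\<close> with failure parameter \<open>\<zeta>\<close>, and returns the output index together
  with the number of oracle queries it used.  The admissibility condition is the
  query bound \<open>c * sqrt N * log(1/\<zeta>)\<close> (its output lies in the index range; the
  probabilistic correctness guarantee is irrelevant to query counting).
\<close>

definition is_QMS ::
  "real \<Rightarrow> (nat \<Rightarrow> nat \<Rightarrow> (nat \<Rightarrow> real) \<Rightarrow> nat \<Rightarrow> real \<Rightarrow> nat \<times> nat) \<Rightarrow> bool"
  where "is_QMS c qms \<longleftrightarrow>
     (\<forall>h s f N \<zeta>. 0 < N \<longrightarrow> 0 < \<zeta> \<longrightarrow> \<zeta> < 1 \<longrightarrow>
        fst (qms h s f N \<zeta>) < N \<and>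
        real (snd (qms h s f N \<zeta>)) \<le> c * sqrt (real N) * ln (1 / \<zeta>))"

definition Qhat ::
  "nat \<Rightarrow> (nat \<Rightarrow> nat \<Rightarrow> nat \<Rightarrow> real) \<Rightarrow> (nat \<Rightarrow> nat \<Rightarrow> nat \<Rightarrow> nat \<Rightarrow> real) \<Rightarrow> (nat \<Rightarrow> real)
    \<Rightarrow> nat \<Rightarrow> nat \<Rightarrow> nat \<Rightarrow> real"
  where "Qhat S r P V h s a = r h s a + (\<Sum>s'<S. P h s a s' * V s')"

text \<open>
  Number of uses of O_QM (or its inverse) per use of the binary oracle for Q-hat_{h,s}:
  for each of the S next states s' one query of O_QM yields r_h(s,a) and P_h(s'|s,a),
  which are accumulated coherently; afterwards the S queries are undone with the
  inverse oracle.
\<close>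

definition qoracle_cost :: "nat \<Rightarrow> nat" where "qoracle_cost S = 2 * S"

text \<open>Classically evaluating V-hat_h(s) = Q-hat_{h,s}(pi(s,h)) uses S queries of O_QM.\<close>

definition qeval_cost :: "nat \<Rightarrow> nat" where "qeval_cost S = S"

text \<open>
  The backward loop of QVI-1.  \<open>qvi1_loop \<dots> k\<close> is the state after processing stages
  H-1, ..., H-k: the current value vector V-hat_{H-k}, the policy pi (indexed as pi s h),
  and the total number of queries to O_QM made so far.
\<close>

primrec qvi1_loop ::
  "nat \<Rightarrow> nat \<Rightarrow> nat \<Rightarrow> (nat \<Rightarrow> nat \<Rightarrow> nat \<Rightarrow> real) \<Rightarrow> (nat \<Rightarrow> nat \<Rightarrow> nat \<Rightarrow> nat \<Rightarrow> real)
    \<Rightarrow> real \<Rightarrow> (nat \<Rightarrow> nat \<Rightarrow> (nat \<Rightarrow> real) \<Rightarrow> nat \<Rightarrow> real \<Rightarrow> nat \<times> nat) \<Rightarrow> nat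
    \<Rightarrow> (nat \<Rightarrow> real) \<times> (nat \<Rightarrow> nat \<Rightarrow> nat) \<times> nat"
  where
  "qvi1_loop S A H r P \<zeta> qms 0 = ((\<lambda>_. 0), (\<lambda>_ _. 0), 0)"
| "qvi1_loop S A H r P \<zeta> qms (Suc k) =
     (case qvi1_loop S A H r P \<zeta> qms k of (V, \<pi>, q) \<Rightarrow>
       (let h = H - Suc k;
            out = (\<lambda>s. qms h s (Qhat S r P V h s) A \<zeta>);
            \<pi>' = (\<lambda>s' h'. if h' = h \<and> s' < S then fst (out s') else \<pi> s' h');
            V' = (\<lambda>s. Qhat S r P V h s (fst (out s)));
            q' = q + (\<Sum>s<S. snd (out s) * qoracle_cost S + qeval_cost S)
        in (V', \<pi>', q')))"

definition qvi1 ::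
  "nat \<Rightarrow> nat \<Rightarrow> nat \<Rightarrow> (nat \<Rightarrow> nat \<Rightarrow> nat \<Rightarrow> real) \<Rightarrow> (nat \<Rightarrow> nat \<Rightarrow> nat \<Rightarrow> nat \<Rightarrow> real)
    \<Rightarrow> real \<Rightarrow> (nat \<Rightarrow> nat \<Rightarrow> (nat \<Rightarrow> real) \<Rightarrow> nat \<Rightarrow> real \<Rightarrow> nat \<times> nat)
    \<Rightarrow> (nat \<Rightarrow> real) \<times> (nat \<Rightarrow> nat \<Rightarrow> nat) \<times> nat"
  where "qvi1 S A H r P \<delta> qms = qvi1_loop S A H r P (\<delta> / (real S * real H)) qms H"

definition qvi1_queries ::
  "nat \<Rightarrow> nat \<Rightarrow> nat \<Rightarrow> (nat \<Rightarrow> nat \<Rightarrow> nat \<Rightarrow> real) \<Rightarrow> (nat \<Rightarrow> nat \<Rightarrow> nat \<Rightarrow> nat \<Rightarrow> real)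
    \<Rightarrow> real \<Rightarrow> (nat \<Rightarrow> nat \<Rightarrow> (nat \<Rightarrow> real) \<Rightarrow> nat \<Rightarrow> real \<Rightarrow> nat \<times> nat) \<Rightarrow> nat"
  where "qvi1_queries S A H r P \<delta> qms = snd (snd (qvi1 S A H r P \<delta> qms))"

end

theory Submission
  imports Defs
begin

text \<open>
  Each of the \<open>H\<close> stages makes \<open>S\<close> calls of QMS over the \<open>A\<close> actions; every QMS query
  to the oracle of \<open>Q-hat\<close> costs \<open>2S\<close> queries to \<open>O_QM\<close>, and reading off \<open>V-hat\<close> costs
  another \<open>S\<close>. With \<open>\<zeta> = \<delta>/(SH)\<close> a stage therefore costs at most
  \<open>S (2S c sqrt A ln(SH/\<delta>) + S)\<close> queries, which is \<open>O(S\<^sup>2 sqrt A log(SH/\<delta>))\<close>.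
  The count never looks at the rewards or transitions.
\<close>

lemma qvi1_loop_queries_Suc:
  "snd (snd (qvi1_loop S A H r P \<zeta> qms (Suc k))) =
     snd (snd (qvi1_loop S A H r P \<zeta> qms k)) +
     (\<Sum>s<S. snd (qms (H - Suc k) s (Qhat S r P (fst (qvi1_loop S A H r P \<zeta> qms k)) (H - Suc k) s) A \<zeta>)
        * qoracle_cost S + qeval_cost S)"
  by (simp add: Let_def split: prod.split)

lemma qvi1_loop_queries_le:
  assumes qms_le: "\<And>h s f. real (snd (qms h s f A \<zeta>)) \<le> B"
  shows "real (snd (snd (qvi1_loop S A H r P \<zeta> qms k)))
           \<le> real k * (real S * (2 * real S * B + real S))"
proof (induction k)
  case 0
  then show ?case by simp
next
  case (Suc k)
  have call_le: "real (snd (qms h s f A \<zeta>) * qoracle_cost S + qeval_cost S) \<le> 2 * real S * B + real S"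
    for h s f
    using mult_left_mono[OF qms_le, of "2 * real S" h s f]
    by (simp add: qoracle_cost_def qeval_cost_def algebra_simps)
  have "real (\<Sum>s<S. snd (qms (H - Suc k) s (Qhat S r P (fst (qvi1_loop S A H r P \<zeta> qms k)) (H - Suc k) s) A \<zeta>)
          * qoracle_cost S + qeval_cost S) \<le> (\<Sum>s<S. 2 * real S * B + real S)"
    unfolding of_nat_sum by (intro sum_mono call_le)
  with Suc.IH show ?case
    unfolding qvi1_loop_queries_Suc of_nat_add by (simp add: algebra_simps)
qed

lemma is_QMS_queries_le:
  assumes "is_QMS c qms" "0 < N" "0 < \<zeta>" "\<zeta> < 1"
  shows "real (snd (qms h s f N \<zeta>)) \<le> c * sqrt (real N) * ln (1 / \<zeta>)"
  using assms unfolding is_QMS_def by blast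

lemma failure_parameter_bounds:
  fixes S H :: nat and \<delta> :: real
  assumes "0 < S" "0 < H" "0 < \<delta>" "\<delta> < 1"
  shows "0 < \<delta> / (real S * real H)" "\<delta> / (real S * real H) < 1"
    and "ln (1 / (\<delta> / (real S * real H))) = ln (real S * real H / \<delta>)"
    and "0 \<le> ln (real S * real H / \<delta>)"
proof -
  have "1 \<le> S * H"
    using assms(1,2) by (simp add: Suc_le_eq)
  then have SH: "1 \<le> real S * real H"
    by (metis of_nat_1 of_nat_le_iff of_nat_mult)
  then show "0 < \<delta> / (real S * real H)" "\<delta> / (real S * real H) < 1"
    using assms(3,4) by (auto simp: field_simps)
  show "ln (1 / (\<delta> / (real S * real H))) = ln (real S * real H / \<delta>)"
    by simp
  show "0 \<le> ln (real S * real H / \<delta>)"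
    using SH assms(3,4) by (simp add: field_simps)
qed

lemma qvi1_cost_le_order:
  fixes S A H c L :: real
  assumes "1 \<le> S" "1 \<le> A" "0 \<le> H" "0 \<le> c" "0 \<le> L"
  shows "H * (S * (2 * S * (c * sqrt A * L) + S))
           \<le> (2 * c + 1) * (S\<^sup>2 * sqrt A * H * max 1 L)"
proof -
  have "S\<^sup>2 * sqrt A * L \<le> S\<^sup>2 * sqrt A * max 1 L"
    using assms by (intro mult_left_mono) auto
  moreover have "S\<^sup>2 * 1 * 1 \<le> S\<^sup>2 * sqrt A * max 1 L"
    using assms by (intro mult_mono) auto
  ultimately have "2 * c * (S\<^sup>2 * sqrt A * L) + S\<^sup>2
                     \<le> 2 * c * (S\<^sup>2 * sqrt A * max 1 L) + S\<^sup>2 * sqrt A * max 1 L"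
    using assms by (intro add_mono mult_left_mono) auto
  from mult_left_mono[OF this \<open>0 \<le> H\<close>] show ?thesis
    by (simp add: power2_eq_square algebra_simps)
qed

theorem theorem3p6:
  fixes c :: real
  assumes "c > 0"
  shows "\<exists>C>0. \<forall>S A H r P \<delta> qms.
     0 < S \<longrightarrow> 0 < A \<longrightarrow> is_finite_MDP S A H r P \<longrightarrow>
     0 < \<delta> \<longrightarrow> \<delta> < 1 \<longrightarrow> is_QMS c qms \<longrightarrow>
     real (qvi1_queries S A H r P \<delta> qms)
       \<le> C * (real S ^ 2 * sqrt (real A) * real H * max 1 (ln (real S * real H / \<delta>)))"
proof (intro exI[of _ "2 * c + 1"] conjI allI impI)
  show "0 < 2 * c + 1" using assms by simp
  fix S A H :: nat and r P and \<delta> :: real and qms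
  assume S: "0 < S" and A: "0 < A" and "is_finite_MDP S A H r P" and \<delta>: "0 < \<delta>" "\<delta> < 1"
    and qms: "is_QMS c qms"
  show "real (qvi1_queries S A H r P \<delta> qms)
       \<le> (2 * c + 1) * (real S ^ 2 * sqrt (real A) * real H * max 1 (ln (real S * real H / \<delta>)))"
  proof (cases "H = 0")
    case True
    then show ?thesis by (simp add: qvi1_queries_def qvi1_def)
  next
    case False
    then have H: "0 < H" by simp
    note \<zeta> = failure_parameter_bounds[OF S H \<delta>]
    have "real (qvi1_queries S A H r P \<delta> qms)
          \<le> real H * (real S * (2 * real S * (c * sqrt (real A) * ln (real S * real H / \<delta>)) + real S))"
      unfolding qvi1_queries_def qvi1_def
      using is_QMS_queries_le[OF qms A \<zeta>(1,2)] \<zeta>(3)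
      by (intro qvi1_loop_queries_le) simp
    also have "\<dots> \<le> (2 * c + 1) * (real S ^ 2 * sqrt (real A) * real H * max 1 (ln (real S * real H / \<delta>)))"
      using S A H assms \<zeta>(4) by (intro qvi1_cost_le_order) auto
    finally show ?thesis .
  qed
qed

end
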